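(* Let $\{\emptyset,\Omega\}=\mathcal{F}_0\subseteq\cdots\subseteq\mathcal{F}_n$ be $\sigma$-fields on a probability space and let $(\xi_i,\mathcal{F}_i)_{i=1,\dots,n}$ be conditionally symmetric martingale differences (each $\xi_i$ is $\mathcal{F}_i$-measurable, integrable, $\mathbf{E}(\xi_i\mid\mathcal{F}_{i-1})=0$, and $\mathbf{P}(\xi_i>y\mid\mathcal{F}_{i-1})=\mathbf{P}(\xi_i<-y\mid\mathcal{F}_{i-1})$ for all $y\ge0$). Then for all $\lambda,y\ge0$ and each $i$, \[ \mathbf{E}\left(\exp\left\{\lambda\xi_i-\tfrac12(\lambda\xi_i)^2\mathbf{1}_{\{|\xi_i|>y\}}\right\}\,\Big|\,\mathcal{F}_{i-1}\right)\le\exp\left\{\left(\frac{\cosh(\lambda y)-1}{y^2}\right)\mathbf{E}\big(\xi_i^2\mathbf{1}_{\{|\xi_i|\le y\}}\mid\mathcal{F}_{i-1}\big)\right\}, \] where by convention $\frac{\cosh(\lambda y)-1}{y^2}=\frac{\lambda^2}{2}$ when $y=0$. *)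

theory Defs
  imports "HOL-Probability.Probability"
begin

definition cosh_coeff :: "real \<Rightarrow> real \<Rightarrow> real" where
  "cosh_coeff l y = (if y = 0 then l^2 / 2 else (cosh (l * y) - 1) / y^2)"

definition cond_prob_sub :: "'a measure \<Rightarrow> 'a measure \<Rightarrow> 'a set \<Rightarrow> 'a \<Rightarrow> real" where
  "cond_prob_sub M F A = real_cond_exp M F (indicator A)"

end

theory Submission
  imports Defs
begin

text \<open>
  Let \<open>f(x) = exp (\<lambda>x - (\<lambda>x)\<^sup>2/2 \<cdot> [|x| > y])\<close> and \<open>\<F> = \<F>\<^sub>i\<^sub>-\<^sub>1\<close>. Conditional symmetry
  makes \<open>\<xi>\<close> and \<open>-\<xi>\<close> conditionally equidistributed given \<open>\<F>\<close>: for every \<open>A \<in> \<F>\<close> the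
  two laws restricted to \<open>A\<close> agree on the rays \<open>(t,\<infinity>)\<close> and \<open>(-\<infinity>,-t)\<close>, \<open>t \<ge> 0\<close>, which form an
  \<open>\<inter>\<close>-stable generator of the Borel sets. Hence \<open>E(f(\<xi>) | \<F>) = E((f(\<xi>) + f(-\<xi>))/2 | \<F>)\<close>.
  Pointwise, the symmetrised function is \<open>exp(-(\<lambda>x)\<^sup>2/2) cosh(\<lambda>x) \<le> 1\<close> for \<open>|x| > y\<close>, and
  \<open>cosh(\<lambda>x) \<le> 1 + c x\<^sup>2\<close> with \<open>c = (cosh(\<lambda>y) - 1)/y\<^sup>2\<close> for \<open>|x| \<le> y\<close>, both by comparing
  power series termwise. Monotonicity of conditional expectation and \<open>1 + t \<le> exp t\<close> finish
  the proof.
\<close>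

lemma two_power_mult_fact_le_fact_double: "2 ^ k * fact k \<le> (fact (2 * k) :: real)"
proof (induction k)
  case 0
  then show ?case by simp
next
  case (Suc k)
  have "(2::real) ^ Suc k * fact (Suc k) = (2 * real k + 2) * (2 ^ k * fact k)"
    by (simp add: algebra_simps)
  also have "\<dots> \<le> (2 * real k + 2) * fact (2 * k)"
    by (intro mult_left_mono Suc.IH) auto
  also have "\<dots> \<le> (2 * real k + 2) * (2 * real k + 1) * fact (2 * k)"
    by (intro mult_right_mono) auto
  also have "\<dots> = fact (2 * Suc k)"
    by (simp add: algebra_simps)
  finally show ?case .
qed

lemma cosh_le_exp_half_square: "cosh (a::real) \<le> exp (a^2 / 2)"
proof -
  have "(\<lambda>k. (\<lambda>n. if even n then a ^ n /\<^sub>R fact n else 0) (2 * k)) sums cosh a"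
    by (subst sums_mono_reindex) (auto simp: strict_mono_def intro: cosh_converges)
  then have cosh_sums: "(\<lambda>k. a ^ (2 * k) / fact (2 * k)) sums cosh a"
    by (simp add: divide_inverse_commute)
  have exp_sums: "(\<lambda>k. (a^2 / 2) ^ k / fact k) sums exp (a^2 / 2)"
    using exp_converges[of "a^2 / 2"] by (simp only: real_scaleR_def divide_inverse_commute)
  show ?thesis
  proof (rule sums_le[OF _ cosh_sums exp_sums])
    fix k
    have "a ^ (2 * k) / fact (2 * k) \<le> a ^ (2 * k) / (2 ^ k * fact k)"
      by (intro divide_left_mono two_power_mult_fact_le_fact_double) (auto simp: power_mult)
    also have "\<dots> = (a^2 / 2) ^ k / fact k"
      by (simp add: power_mult power_divide)
    finally show "a ^ (2 * k) / fact (2 * k) \<le> (a^2 / 2) ^ k / fact k" .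
  qed
qed

lemma cosh_minus_one_sums:
  "(\<lambda>n. if even n \<and> n \<noteq> 0 then z ^ n / fact n else 0) sums (cosh z - 1 :: real)"
proof -
  have "(\<lambda>n. (if even n then z ^ n /\<^sub>R fact n else 0) - (if n = 0 then 1 else 0)) sums (cosh z - 1)"
    by (intro sums_diff cosh_converges sums_single)
  moreover have "(\<lambda>n. (if even n then z ^ n /\<^sub>R fact n else 0) - (if n = 0 then 1 else 0))
    = (\<lambda>n. if even n \<and> n \<noteq> 0 then z ^ n / fact n else 0)"
    by (auto simp: divide_inverse mult.commute)
  ultimately show ?thesis by simp
qed

lemma cosh_minus_one_scaled_le:
  fixes x Y :: real
  assumes "\<bar>x\<bar> \<le> Y"
  shows "Y^2 * (cosh x - 1) \<le> x^2 * (cosh Y - 1)"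
proof (rule sums_le[OF _ sums_mult[OF cosh_minus_one_sums] sums_mult[OF cosh_minus_one_sums]])
  fix n
  show "Y^2 * (if even n \<and> n \<noteq> 0 then x ^ n / fact n else 0)
    \<le> x^2 * (if even n \<and> n \<noteq> 0 then Y ^ n / fact n else 0)"
  proof (cases "even n \<and> n \<noteq> 0")
    case True
    then obtain m where n: "n = Suc (Suc m)" and "even m"
      by (metis dvd_0_right even_Suc not0_implies_Suc)
    then have "Y^2 * x ^ n = x^2 * (Y^2 * \<bar>x\<bar> ^ m)"
      by (simp add: power2_eq_square power_even_abs)
    also have "\<dots> \<le> x^2 * (Y^2 * Y ^ m)"
      using assms by (intro mult_left_mono power_mono) auto
    also have "\<dots> = x^2 * Y ^ n"
      by (simp add: n power2_eq_square)
    finally have "Y^2 * x ^ n / fact n \<le> x^2 * Y ^ n / fact n"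
      by (simp add: divide_right_mono)
    with True show ?thesis by simp
  qed auto
qed

lemma cosh_le_one_plus_cosh_coeff:
  fixes l x y :: real
  assumes "\<bar>x\<bar> \<le> y"
  shows "cosh (l * x) \<le> 1 + cosh_coeff l y * x^2"
proof (cases "l = 0 \<or> y = 0")
  case True
  then have "cosh (l * x) = 1" using assms by auto
  moreover have "0 \<le> cosh_coeff l y * x^2"
    using True by (auto simp: cosh_coeff_def)
  ultimately show ?thesis by linarith
next
  case False
  have "\<bar>l * x\<bar> \<le> \<bar>l * y\<bar>"
    using assms by (simp add: abs_mult mult_left_mono)
  then have "(l * y)^2 * (cosh (l * x) - 1) \<le> (l * x)^2 * (cosh (l * y) - 1)"
    using cosh_minus_one_scaled_le by fastforce
  also have "\<dots> = (l * y)^2 * (x^2 * ((cosh (l * y) - 1) / y^2))"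
    unfolding power_mult_distrib using False by (simp add: field_simps)
  finally have "(l * y)^2 * (cosh (l * x) - 1) \<le> (l * y)^2 * (x^2 * ((cosh (l * y) - 1) / y^2))" .
  then have "cosh (l * x) - 1 \<le> x^2 * ((cosh (l * y) - 1) / y^2)"
    by (rule mult_left_le_imp_le) (use False in simp)
  then show ?thesis
    using False by (simp add: cosh_coeff_def mult.commute)
qed

definition truncated_exp :: "real \<Rightarrow> real \<Rightarrow> real \<Rightarrow> real" where
  "truncated_exp l y x = exp (l * x - (1/2) * (l * x)^2 * of_bool (y < \<bar>x\<bar>))"

definition truncated_square :: "real \<Rightarrow> real \<Rightarrow> real" where
  "truncated_square y x = x^2 * of_bool (\<bar>x\<bar> \<le> y)"

lemma truncated_exp_symmetrization_le:
  "(truncated_exp l y x + truncated_exp l y (- x)) / 2 \<le> 1 + cosh_coeff l y * truncated_square y x"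
proof (cases "y < \<bar>x\<bar>")
  case True
  have "exp (l * x - (1/2) * (l * x)^2) = exp (- ((l * x)^2 / 2)) * exp (l * x)"
    "exp (l * (- x) - (1/2) * (l * (- x))^2) = exp (- ((l * x)^2 / 2)) * exp (- (l * x))"
    by (simp_all flip: exp_add)
  with True have "(truncated_exp l y x + truncated_exp l y (- x)) / 2 = exp (- ((l * x)^2 / 2)) * cosh (l * x)"
    by (simp add: truncated_exp_def cosh_field_def algebra_simps)
  also have "\<dots> \<le> exp (- ((l * x)^2 / 2)) * exp ((l * x)^2 / 2)"
    by (intro mult_left_mono cosh_le_exp_half_square) auto
  also have "\<dots> = 1"
    by (simp add: exp_minus field_simps)
  finally show ?thesis
    using True by (simp add: truncated_square_def)
next
  case False
  then have "(truncated_exp l y x + truncated_exp l y (- x)) / 2 = cosh (l * x)"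
    by (simp add: truncated_exp_def cosh_field_def)
  with False cosh_le_one_plus_cosh_coeff[of x y l] show ?thesis
    by (simp add: truncated_square_def)
qed

lemma abs_truncated_exp_le: "\<bar>truncated_exp l y x\<bar> \<le> exp (\<bar>l * y\<bar> + 1/2)"
proof (cases "y < \<bar>x\<bar>")
  case True
  have "l * x - (1/2) * (l * x)^2 \<le> 1/2"
    using zero_le_power2[of "l * x - 1"] by (simp add: power2_eq_square algebra_simps)
  with True show ?thesis
    by (simp add: truncated_exp_def)
next
  case False
  have "l * x \<le> \<bar>l\<bar> * \<bar>x\<bar>"
    by (metis abs_ge_self abs_mult)
  also have "\<dots> \<le> \<bar>l * y\<bar>"
    using False by (simp add: abs_mult mult_left_mono)
  finally have "l * x \<le> \<bar>l * y\<bar>" .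
  with False show ?thesis
    by (simp add: truncated_exp_def)
qed

lemma abs_truncated_square_le: "\<bar>truncated_square y x\<bar> \<le> y^2"
  using power_mono[of "\<bar>x\<bar>" y 2] by (auto simp: truncated_square_def)

lemma borel_measurable_truncated_exp [measurable]: "truncated_exp l y \<in> borel_measurable borel"
  unfolding truncated_exp_def by measurable

lemma borel_measurable_truncated_square [measurable]: "truncated_square y \<in> borel_measurable borel"
  unfolding truncated_square_def by measurable

text \<open>The events compared by the conditional symmetry hypothesis, completed to an
  \<open>\<inter>\<close>-stable family.\<close>

definition symmetric_rays :: "real set set" where
  "symmetric_rays = {{t<..} | t. 0 \<le> t} \<union> {{..< -t} | t. 0 \<le> t} \<union> {{}, UNIV}"

lemma atMost_in_sigma_symmetric_rays:
  fixes c :: real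
  assumes "c < 0"
  shows "{..c} \<in> sigma_sets UNIV symmetric_rays"
proof -
  have "{..c} = (\<Inter>n. {..< min 0 (c + inverse (Suc n))})"
  proof (intro set_eqI iffI)
    fix x assume "x \<in> {..c}"
    moreover have "0 < inverse (real (Suc n))" for n
      by simp
    ultimately show "x \<in> (\<Inter>n. {..< min 0 (c + inverse (Suc n))})"
      unfolding INT_iff lessThan_iff min_less_iff_conj using assms
      by (smt (verit) atMost_iff)
  next
    fix x assume x: "x \<in> (\<Inter>n. {..< min 0 (c + inverse (Suc n))})"
    show "x \<in> {..c}"
    proof (rule ccontr)
      assume "x \<notin> {..c}"
      then obtain n where n: "inverse (real (Suc n)) < x - c"
        using reals_Archimedean[of "x - c"] by auto
      have "x \<in> {..< min 0 (c + inverse (Suc n))}"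
        using x by (rule INT_D) simp
      then have "x < c + inverse (real (Suc n))"
        by simp
      with n show False by linarith
    qed
  qed
  also have "\<dots> \<in> sigma_sets UNIV symmetric_rays"
  proof (rule sigma_sets_Inter)
    fix n :: nat
    have "{..< min 0 (c + inverse (Suc n))} \<in> {{..< -t} | t. 0 \<le> t}"
      by (rule CollectI, rule exI[of _ "- min 0 (c + inverse (Suc n))"]) simp
    then have "{..< min 0 (c + inverse (Suc n))} \<in> symmetric_rays"
      unfolding symmetric_rays_def by (intro UnI1 UnI2)
    then show "{..< min 0 (c + inverse (Suc n))} \<in> sigma_sets UNIV symmetric_rays" ..
  qed simp
  finally show ?thesis .
qed

lemma sets_borel_eq_sigma_symmetric_rays:
  "sets (borel :: real measure) = sigma_sets UNIV symmetric_rays"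
proof -
  have borel_eq: "sets (borel :: real measure) = sigma_sets UNIV (range greaterThan)"
    by (subst borel_Ioi) simp
  also have "\<dots> = sigma_sets UNIV symmetric_rays"
  proof (rule sigma_sets_eqI)
    fix a assume "a \<in> range (greaterThan :: real \<Rightarrow> real set)"
    then obtain c where a: "a = {c<..}" by auto
    show "a \<in> sigma_sets UNIV symmetric_rays"
    proof (cases "0 \<le> c")
      case True
      then have "a \<in> symmetric_rays"
        unfolding a symmetric_rays_def by (intro UnI1 CollectI exI[of _ c]) simp
      then show ?thesis ..
    next
      case False
      then have "UNIV - {..c} \<in> sigma_sets UNIV symmetric_rays"
        by (intro sigma_sets.Compl atMost_in_sigma_symmetric_rays) simp
      moreover have "UNIV - {..c} = a" using a by auto
      ultimately show ?thesis by simp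
    qed
  next
    fix b assume "b \<in> symmetric_rays"
    then have "b \<in> sets (borel :: real measure)" unfolding symmetric_rays_def by auto
    then show "b \<in> sigma_sets UNIV (range greaterThan)"
      using borel_eq by simp
  qed
  finally show ?thesis .
qed

lemma Int_stable_symmetric_rays: "Int_stable symmetric_rays"
proof (rule Int_stableI)
  fix a b assume "a \<in> symmetric_rays" "b \<in> symmetric_rays"
  moreover have "{t<..} \<inter> {s<..} = {max t s<..}" "{..< -t} \<inter> {..< -s} = {..< - max t s}"
    "0 \<le> t \<Longrightarrow> 0 \<le> s \<Longrightarrow> {t<..} \<inter> {..< -s} = {}" for t s :: real
    by auto
  ultimately show "a \<inter> b \<in> symmetric_rays"
    unfolding symmetric_rays_def by (auto simp: Int_commute)
qed

lemma (in finite_measure) distr_uminus_eq_distr: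
  fixes X :: "'a \<Rightarrow> real"
  assumes [measurable]: "X \<in> borel_measurable M"
    and tails: "\<And>t. 0 \<le> t \<Longrightarrow>
      measure M {\<omega> \<in> space M. t < X \<omega>} = measure M {\<omega> \<in> space M. X \<omega> < - t}"
  shows "distr M borel (\<lambda>\<omega>. - X \<omega>) = distr M borel X"
proof (rule measure_eqI_generator_eq[where E=symmetric_rays and \<Omega>=UNIV and A="\<lambda>_. UNIV"])
  fix B assume "B \<in> symmetric_rays"
  then have [measurable]: "B \<in> sets borel"
    using sets_borel_eq_sigma_symmetric_rays by auto
  from \<open>B \<in> symmetric_rays\<close> consider (upper) t where "0 \<le> t" "B = {t<..}"
    | (lower) t where "0 \<le> t" "B = {..< -t}" | (trivial) "B = {} \<or> B = UNIV"
    unfolding symmetric_rays_def by blast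
  then show "emeasure (distr M borel (\<lambda>\<omega>. - X \<omega>)) B = emeasure (distr M borel X) B"
  proof cases
    case (upper t)
    then have "(\<lambda>\<omega>. - X \<omega>) -` B \<inter> space M = {\<omega> \<in> space M. X \<omega> < - t}"
      "X -` B \<inter> space M = {\<omega> \<in> space M. t < X \<omega>}"
      by auto
    with tails[OF upper(1)] show ?thesis
      by (simp add: emeasure_distr emeasure_eq_measure)
  next
    case (lower t)
    then have "(\<lambda>\<omega>. - X \<omega>) -` B \<inter> space M = {\<omega> \<in> space M. t < X \<omega>}"
      "X -` B \<inter> space M = {\<omega> \<in> space M. X \<omega> < - t}"
      by auto
    with tails[OF lower(1)] show ?thesis
      by (simp add: emeasure_distr emeasure_eq_measure)
  qed (auto simp: emeasure_distr)
next
  show "Int_stable symmetric_rays"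
    by (rule Int_stable_symmetric_rays)
  show "range (\<lambda>_. UNIV) \<subseteq> symmetric_rays"
    by (auto simp: symmetric_rays_def)
  have "(\<lambda>\<omega>. - X \<omega>) \<in> borel_measurable M"
    by measurable
  then show "emeasure (distr M borel (\<lambda>\<omega>. - X \<omega>)) UNIV \<noteq> \<infinity>"
    by (simp add: emeasure_distr)
  show "sets (distr M borel (\<lambda>\<omega>. - X \<omega>)) = sigma_sets UNIV symmetric_rays"
    "sets (distr M borel X) = sigma_sets UNIV symmetric_rays"
    using sets_borel_eq_sigma_symmetric_rays by simp_all
qed simp_all

lemma (in finite_measure) integral_comp_uminus_eq:
  fixes X g :: "_ \<Rightarrow> real"
  assumes X: "X \<in> borel_measurable M"
    and tails: "\<And>t. 0 \<le> t \<Longrightarrow>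
      measure M {\<omega> \<in> space M. t < X \<omega>} = measure M {\<omega> \<in> space M. X \<omega> < - t}"
    and g: "g \<in> borel_measurable borel"
  shows "(\<integral>\<omega>. g (- X \<omega>) \<partial>M) = (\<integral>\<omega>. g (X \<omega>) \<partial>M)"
proof -
  have "(\<lambda>\<omega>. - X \<omega>) \<in> borel_measurable M"
    using X by simp
  then have "(\<integral>\<omega>. g (- X \<omega>) \<partial>M) = integral\<^sup>L (distr M borel (\<lambda>\<omega>. - X \<omega>)) g"
    by (rule integral_distr[OF _ g, symmetric])
  also have "\<dots> = integral\<^sup>L (distr M borel X) g"
    by (simp only: distr_uminus_eq_distr[OF X tails])
  also have "\<dots> = (\<integral>\<omega>. g (X \<omega>) \<partial>M)"
    by (rule integral_distr[OF X g])
  finally show ?thesis .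
qed

lemma (in finite_measure) set_integral_comp_uminus_eq:
  fixes X g :: "_ \<Rightarrow> real"
  assumes [measurable]: "X \<in> borel_measurable M" "A \<in> sets M"
    and tails: "\<And>t. 0 \<le> t \<Longrightarrow>
      measure M (A \<inter> {\<omega> \<in> space M. t < X \<omega>}) = measure M (A \<inter> {\<omega> \<in> space M. X \<omega> < - t})"
    and g: "g \<in> borel_measurable borel"
  shows "(\<integral>\<omega>\<in>A. g (- X \<omega>) \<partial>M) = (\<integral>\<omega>\<in>A. g (X \<omega>) \<partial>M)"
proof -
  let ?R = "restrict_space M A"
  interpret R: finite_measure ?R
    by (rule finite_measure_restrict_space) (simp_all add: finite_measure_axioms)
  have "(\<integral>\<omega>. g (- X \<omega>) \<partial>?R) = (\<integral>\<omega>. g (X \<omega>) \<partial>?R)"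
  proof (rule R.integral_comp_uminus_eq[OF _ _ g])
    show "X \<in> borel_measurable ?R"
      by (rule measurable_restrict_space1) simp
    have "measure ?R {\<omega> \<in> space ?R. P \<omega>} = measure M (A \<inter> {\<omega> \<in> space M. P \<omega>})" for P
    proof -
      have "{\<omega> \<in> space ?R. P \<omega>} = A \<inter> {\<omega> \<in> space M. P \<omega>}"
        using sets.sets_into_space[of A M] by (auto simp: space_restrict_space)
      then show ?thesis
        by (simp add: measure_restrict_space)
    qed
    then show "measure ?R {\<omega> \<in> space ?R. t < X \<omega>} = measure ?R {\<omega> \<in> space ?R. X \<omega> < - t}"
      if "0 \<le> t" for t
      using tails[OF that] by presburger
  qed
  then show ?thesis
    by (simp add: set_lebesgue_integral_def integral_restrict_space)
qed

lemma (in sigma_finite_subalgebra) measure_Int_eq_set_integral_cond_prob: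
  assumes A: "A \<in> sets F" and [measurable]: "S \<in> sets M" and fin: "emeasure M S < \<infinity>"
  shows "measure M (A \<inter> S) = (\<integral>\<omega>\<in>A. cond_prob_sub M F S \<omega> \<partial>M)"
proof -
  have [measurable]: "A \<in> sets M"
    using A subalg by (auto simp: subalgebra_def)
  have "measure M (A \<inter> S) = (\<integral>\<omega>\<in>A. indicator S \<omega> \<partial>M)"
    using sets.sets_into_space[of S M]
    by (simp add: set_lebesgue_integral_def indicator_inter_arith[symmetric] Int_absorb2 Int_assoc)
  also have "\<dots> = (\<integral>\<omega>\<in>A. real_cond_exp M F (indicator S) \<omega> \<partial>M)"
    by (rule real_cond_exp_intA[OF integrable_real_indicator[OF _ fin] A]) simp
  finally show ?thesis
    unfolding cond_prob_sub_def .
qed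

lemma (in finite_measure_subalgebra) measure_Int_eq_if_cond_prob_eq:
  assumes [measurable]: "S \<in> sets M" "T \<in> sets M"
    and eq: "AE \<omega> in M. cond_prob_sub M F S \<omega> = cond_prob_sub M F T \<omega>"
    and A: "A \<in> sets F"
  shows "measure M (A \<inter> S) = measure M (A \<inter> T)"
proof -
  have [measurable]: "A \<in> sets M"
    using A subalg by (auto simp: subalgebra_def)
  have [measurable]: "cond_prob_sub M F B \<in> borel_measurable M" for B
    unfolding cond_prob_sub_def by (rule borel_measurable_cond_exp2)
  have "(\<integral>\<omega>\<in>A. cond_prob_sub M F S \<omega> \<partial>M) = (\<integral>\<omega>\<in>A. cond_prob_sub M F T \<omega> \<partial>M)"
    using eq by (intro set_lebesgue_integral_cong_AE) auto
  then show ?thesis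
    using A by (simp add: measure_Int_eq_set_integral_cond_prob emeasure_finite less_top[symmetric])
qed

lemma (in finite_measure_subalgebra) real_cond_exp_comp_uminus:
  fixes X g :: "_ \<Rightarrow> real"
  assumes [measurable]: "X \<in> borel_measurable M"
    and symm: "\<And>t. 0 \<le> t \<Longrightarrow> AE \<omega> in M.
      cond_prob_sub M F {\<omega> \<in> space M. t < X \<omega>} \<omega> = cond_prob_sub M F {\<omega> \<in> space M. X \<omega> < - t} \<omega>"
    and g: "g \<in> borel_measurable borel"
    and int: "integrable M (\<lambda>\<omega>. g (X \<omega>))" "integrable M (\<lambda>\<omega>. g (- X \<omega>))"
  shows "AE \<omega> in M. real_cond_exp M F (\<lambda>\<omega>. g (- X \<omega>)) \<omega> = real_cond_exp M F (\<lambda>\<omega>. g (X \<omega>)) \<omega>"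
proof (rule real_cond_exp_charact)
  fix A assume A: "A \<in> sets F"
  have "A \<in> sets M"
    using A subalg by (auto simp: subalgebra_def)
  moreover have "measure M (A \<inter> {\<omega> \<in> space M. t < X \<omega>}) = measure M (A \<inter> {\<omega> \<in> space M. X \<omega> < - t})"
    if "0 \<le> t" for t
    by (rule measure_Int_eq_if_cond_prob_eq[OF _ _ symm[OF that] A]) measurable
  ultimately have "(\<integral>\<omega>\<in>A. g (- X \<omega>) \<partial>M) = (\<integral>\<omega>\<in>A. g (X \<omega>) \<partial>M)"
    by (intro set_integral_comp_uminus_eq g) auto
  also have "\<dots> = (\<integral>\<omega>\<in>A. real_cond_exp M F (\<lambda>\<omega>. g (X \<omega>)) \<omega> \<partial>M)"
    by (rule real_cond_exp_intA[OF int(1) A])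
  finally show "(\<integral>\<omega>\<in>A. g (- X \<omega>) \<partial>M) = (\<integral>\<omega>\<in>A. real_cond_exp M F (\<lambda>\<omega>. g (X \<omega>)) \<omega> \<partial>M)" .
qed (use int in auto)

lemma (in sigma_finite_subalgebra) real_cond_exp_cong_space:
  assumes "\<And>\<omega>. \<omega> \<in> space M \<Longrightarrow> f \<omega> = g \<omega>"
    and "f \<in> borel_measurable M" "g \<in> borel_measurable M"
  shows "AE \<omega> in M. real_cond_exp M F f \<omega> = real_cond_exp M F g \<omega>"
  using assms by (intro real_cond_exp_cong AE_I2) auto

lemma (in finite_measure_subalgebra) real_cond_exp_truncated_exp_le:
  fixes X :: "'a \<Rightarrow> real"
  assumes [measurable]: "X \<in> borel_measurable M"
    and symm: "\<And>t. 0 \<le> t \<Longrightarrow> AE \<omega> in M.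
      cond_prob_sub M F {\<omega> \<in> space M. t < X \<omega>} \<omega> = cond_prob_sub M F {\<omega> \<in> space M. X \<omega> < - t} \<omega>"
  shows "AE \<omega> in M. real_cond_exp M F (\<lambda>\<omega>. truncated_exp l y (X \<omega>)) \<omega>
    \<le> exp (cosh_coeff l y * real_cond_exp M F (\<lambda>\<omega>. truncated_square y (X \<omega>)) \<omega>)"
proof -
  let ?f = "truncated_exp l y" and ?q = "truncated_square y" and ?c = "cosh_coeff l y"
  let ?E = "real_cond_exp M F"
  have bounded_integrable: "integrable M (\<lambda>\<omega>. h (Z \<omega>))"
    if "Z \<in> borel_measurable M" "h \<in> borel_measurable borel" "\<And>x. \<bar>h x\<bar> \<le> B"
    for Z :: "'a \<Rightarrow> real" and h :: "real \<Rightarrow> real" and B :: real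
    using that by (intro integrable_const_bound[where B=B]) auto
  have int_f: "integrable M (\<lambda>\<omega>. ?f (X \<omega>))"
    by (rule bounded_integrable[OF _ _ abs_truncated_exp_le]) measurable
  have int_f_uminus: "integrable M (\<lambda>\<omega>. ?f (- X \<omega>))"
    by (rule bounded_integrable[OF _ _ abs_truncated_exp_le]) measurable
  have int_q: "integrable M (\<lambda>\<omega>. ?q (X \<omega>))"
    by (rule bounded_integrable[OF _ _ abs_truncated_square_le]) measurable
  have "AE \<omega> in M. ?E (\<lambda>\<omega>. ?f (- X \<omega>)) \<omega> = ?E (\<lambda>\<omega>. ?f (X \<omega>)) \<omega>"
    by (rule real_cond_exp_comp_uminus[OF _ symm _ int_f int_f_uminus]) simp_all
  moreover have "AE \<omega> in M. ?E (\<lambda>\<omega>. (?f (X \<omega>) + ?f (- X \<omega>)) / 2) \<omega>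
      = ?E (\<lambda>\<omega>. ?f (X \<omega>) + ?f (- X \<omega>)) \<omega> / 2"
    by (rule real_cond_exp_cdiv[OF Bochner_Integration.integrable_add[OF int_f int_f_uminus]])
  moreover have "AE \<omega> in M. ?E (\<lambda>\<omega>. ?f (X \<omega>) + ?f (- X \<omega>)) \<omega>
      = ?E (\<lambda>\<omega>. ?f (X \<omega>)) \<omega> + ?E (\<lambda>\<omega>. ?f (- X \<omega>)) \<omega>"
    by (rule real_cond_exp_add[OF int_f int_f_uminus])
  moreover have "AE \<omega> in M. ?E (\<lambda>\<omega>. (?f (X \<omega>) + ?f (- X \<omega>)) / 2) \<omega>
      \<le> ?E (\<lambda>\<omega>. 1 + ?c * ?q (X \<omega>)) \<omega>"
    by (intro real_cond_exp_mono AE_I2 truncated_exp_symmetrization_le)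
      (use int_f int_f_uminus int_q in auto)
  moreover have "AE \<omega> in M. ?E (\<lambda>\<omega>. 1 + ?c * ?q (X \<omega>)) \<omega>
      = ?E (\<lambda>_. 1) \<omega> + ?E (\<lambda>\<omega>. ?c * ?q (X \<omega>)) \<omega>"
    using int_q by (intro real_cond_exp_add) auto
  moreover have "AE \<omega> in M. ?E (\<lambda>_. 1) \<omega> = 1"
    by (rule real_cond_exp_F_meas) simp_all
  moreover have "AE \<omega> in M. ?E (\<lambda>\<omega>. ?c * ?q (X \<omega>)) \<omega> = ?c * ?E (\<lambda>\<omega>. ?q (X \<omega>)) \<omega>"
    by (rule real_cond_exp_cmult[OF int_q])
  ultimately show ?thesis
  proof eventually_elim
    case (elim \<omega>)
    then have "?E (\<lambda>\<omega>. ?f (X \<omega>)) \<omega> \<le> 1 + ?c * ?E (\<lambda>\<omega>. ?q (X \<omega>)) \<omega>"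
      by simp
    also have "\<dots> \<le> exp (?c * ?E (\<lambda>\<omega>. ?q (X \<omega>)) \<omega>)"
      by (rule exp_ge_add_one_self)
    finally show ?case .
  qed
qed

text \<open>Only measurability and conditional symmetry of \<open>\<xi> i\<close> are used: the bound holds without
  the martingale, integrability and filtration hypotheses, and for all real \<open>l\<close> and \<open>y\<close>.\<close>

theorem lemma6p1:
  fixes M :: "'a measure" and F :: "nat \<Rightarrow> 'a measure" and n :: nat
    and l :: real and y :: real and i :: nat and \<xi> :: "nat \<Rightarrow> 'a \<Rightarrow> real"
  assumes "prob_space M"
    and subalg: "\<And>i. i \<le> n \<Longrightarrow> subalgebra M (F i)"
    and F0: "sets (F 0) = {{}, space M}"
    and mono: "\<And>i j. i \<le> j \<Longrightarrow> j \<le> n \<Longrightarrow> sets (F i) \<subseteq> sets (F j)"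
    and meas: "\<And>i. 1 \<le> i \<Longrightarrow> i \<le> n \<Longrightarrow> \<xi> i \<in> borel_measurable (F i)"
    and integ: "\<And>i. 1 \<le> i \<Longrightarrow> i \<le> n \<Longrightarrow> integrable M (\<xi> i)"
    and mart: "\<And>i. 1 \<le> i \<Longrightarrow> i \<le> n \<Longrightarrow>
                 AE x in M. real_cond_exp M (F (i - 1)) (\<xi> i) x = 0"
    and symm: "\<And>i y. 1 \<le> i \<Longrightarrow> i \<le> n \<Longrightarrow> 0 \<le> y \<Longrightarrow>
                 AE x in M. cond_prob_sub M (F (i - 1)) {\<omega> \<in> space M. \<xi> i \<omega> > y} x
                          = cond_prob_sub M (F (i - 1)) {\<omega> \<in> space M. \<xi> i \<omega> < - y} x"
    and i: "1 \<le> i" "i \<le> n"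
    and lam: "0 \<le> l" and y: "0 \<le> y"
  shows "AE x in M.
           real_cond_exp M (F (i - 1))
             (\<lambda>\<omega>. exp (l * \<xi> i \<omega> - (1/2) * (l * \<xi> i \<omega>)^2
                          * indicator {\<omega>' \<in> space M. \<bar>\<xi> i \<omega>'\<bar> > y} \<omega>)) x
         \<le> exp (cosh_coeff l y *
                 real_cond_exp M (F (i - 1))
                   (\<lambda>\<omega>. (\<xi> i \<omega>)^2 * indicator {\<omega>' \<in> space M. \<bar>\<xi> i \<omega>'\<bar> \<le> y} \<omega>) x)"
proof -
  have [measurable]: "\<xi> i \<in> borel_measurable M"
    using measurable_from_subalg[OF subalg[OF i(2)] meas[OF i]] .
  interpret prob_space M by fact
  interpret finite_measure_subalgebra M "F (i - 1)"
    by unfold_locales (use subalg i in simp)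
  have "AE x in M. real_cond_exp M (F (i - 1))
      (\<lambda>\<omega>. exp (l * \<xi> i \<omega> - (1/2) * (l * \<xi> i \<omega>)^2
        * indicator {\<omega>' \<in> space M. \<bar>\<xi> i \<omega>'\<bar> > y} \<omega>)) x
    = real_cond_exp M (F (i - 1)) (\<lambda>\<omega>. truncated_exp l y (\<xi> i \<omega>)) x"
    by (rule real_cond_exp_cong_space)
      (simp add: truncated_exp_def indicator_def, measurable, measurable)
  moreover have "AE x in M. real_cond_exp M (F (i - 1))
      (\<lambda>\<omega>. (\<xi> i \<omega>)^2 * indicator {\<omega>' \<in> space M. \<bar>\<xi> i \<omega>'\<bar> \<le> y} \<omega>) x
    = real_cond_exp M (F (i - 1)) (\<lambda>\<omega>. truncated_square y (\<xi> i \<omega>)) x"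
    by (rule real_cond_exp_cong_space)
      (simp add: truncated_square_def indicator_def, measurable, measurable)
  moreover have "AE x in M. real_cond_exp M (F (i - 1)) (\<lambda>\<omega>. truncated_exp l y (\<xi> i \<omega>)) x
    \<le> exp (cosh_coeff l y * real_cond_exp M (F (i - 1)) (\<lambda>\<omega>. truncated_square y (\<xi> i \<omega>)) x)"
    using symm[OF i] by (intro real_cond_exp_truncated_exp_le) auto
  ultimately show ?thesis
    by eventually_elim simp
qed

end
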